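(* Let $n$ be a positive integer and let $f$ be the function on $\mathbb{F}_{2^n}$ defined by $f(0)=1$, $f(1)=0$ and $f(x)=x^{-1}$ for $x\notin\{0,1\}$ (i.e. $f=Inv\circ(0,1)$). For $a,b\in\mathbb{F}_{2^n}$ let $\nabla_f(a,b)$ denote the number of $x\in\mathbb{F}_{2^n}$ such that $f(x+a+b)+f(x+a)+f(x+b)+f(x)=0$. Then \[ \nabla_f(a,b)= \begin{cases} 2^n, &\text{if } ab(a+b)=0,\\ 8, &\text{if } a\ne b \text{ and } a^3+a+1=b^3+b+1=0,\\ 4, &\text{if } ab(a+b)\ne 0 \text{ and } [\,a,b\in\mathbb{F}_4^* \text{ or } (a,b)\in S\,],\\ 0, &\text{otherwise,} \end{cases} \] where \[ S=\{(a,b)\in\mathbb{F}_{2^n}^*\times\mathbb{F}_{2^n}^* : a^2+b^2+ab\in\{1,\,ab(a+b)\}\}\setminus\{(a,b)\in\mathbb{F}_{2^3}^*\times\mathbb{F}_{2^3}^* : a^3+a+1=b^3+b+1=0\}. \]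
   Context: $Inv(x)=x^{2^n-2}$ is the multiplicative inverse map on $\mathbb{F}_{2^n}$ (with $Inv(0)=0$), and $(0,1)$ denotes the transposition of $\mathbb{F}_{2^n}$ swapping $0$ and $1$; $Inv\circ(0,1)$ means $x\mapsto Inv((0,1)(x))$. $\mathbb{F}_4^*$ and $\mathbb{F}_{2^3}^*$ denote the nonzero elements of the subfields of order $4$ and $8$ of $\mathbb{F}_{2^n}$ (when these subfields exist; conditions referring to them are void otherwise). $\mathbb{F}_{2^n}^*=\mathbb{F}_{2^n}\setminus\{0\}$. *)

theory Defs
  imports Main
begin

text \<open>The field F_{2^n} is rendered as a finite field type 'a with card UNIV = 2^n.\<close>

definition inv_swap :: "'a::field \<Rightarrow> 'a" where
  "inv_swap x = (if x = 0 then 1 else if x = 1 then 0 else inverse x)"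

definition nabla :: "('a::{field,finite} \<Rightarrow> 'a) \<Rightarrow> 'a \<Rightarrow> 'a \<Rightarrow> nat" where
  "nabla f a b = card {x. f (x + a + b) + f (x + a) + f (x + b) + f x = 0}"

text \<open>Nonzero elements of the subfield of order 2^k of F_{2^n}; empty if it does not exist (k not dividing n).\<close>
definition subfield_star :: "nat \<Rightarrow> nat \<Rightarrow> 'a::field set" where
  "subfield_star n k = {x. k dvd n \<and> x \<noteq> 0 \<and> x ^ (2 ^ k) = x}"

definition S_set :: "nat \<Rightarrow> ('a::field \<times> 'a) set" where
  "S_set n = {(a, b). a \<noteq> 0 \<and> b \<noteq> 0 \<and> (a^2 + b^2 + a*b = 1 \<or> a^2 + b^2 + a*b = a*b*(a+b))}
     - {(a, b). a \<in> subfield_star n 3 \<and> b \<in> subfield_star n 3 \<and> a^3 + a + 1 = 0 \<and> b^3 + b + 1 = 0}"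

end

theory Submission
  imports Defs "HOL-Number_Theory.Residues"
begin

(*
  Put D(x) = f(x+a+b) + f(x+a) + f(x+b) + f(x) and V = {0, a, b, a+b}, so that nabla_f(a,b)
  counts the zeros of D, and D is V-periodic. In characteristic 2 the inverse map satisfies
  Inv(x+a+b) + Inv(x+a) + Inv(x+b) + Inv(x) = ab(a+b) / (x(x+a)(x+b)(x+a+b)) as long as no
  x + v with v in V vanishes. As f agrees with Inv off {0, 1}, the zeros of D therefore lie in
  the two cosets V and 1 + V, each contributing 4 or 0 zeros. With q = a^2 + b^2 + ab and
  p = ab(a+b), evaluating D at 0 and 1 shows: if 1 is not in V, D vanishes on V iff q = p and
  on 1 + V iff q = 1; if 1 is in V (equivalently q = 1 + p, since
  (1+a)(1+b)(1+a+b) = 1 + q + p), D vanishes on V iff p = 1. Finally, q = p = 1 holds iff a, b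
  are distinct roots of x^3 + x + 1, and "1 in V and p = 1" holds iff a, b are distinct cube
  roots of unity, which forces F_4 into the field, i.e. n even.
*)

lemma CHAR_eq_2_if_card_eq_power_2:
  assumes "card (UNIV :: 'a::{field,finite} set) = 2 ^ n"
  shows "CHAR('a) = 2"
proof -
  have "prime CHAR('a)"
    by (simp add: finite_imp_CHAR_pos prime_CHAR_semidom)
  moreover have "CHAR('a) dvd 2 ^ n"
    using CHAR_dvd_CARD [where 'a='a] assms by simp
  ultimately show ?thesis
    by (metis prime_dvd_power primes_dvd_imp_eq two_is_prime_nat)
qed

(* The library's finite_field_power_card_eq_same is stated for the class finite_field,
   which a type variable of sort {field, finite} cannot be shown to belong to. *)
lemma power_card_eq_self:
  fixes x :: "'a::{field,finite}"
  shows "x ^ card (UNIV :: 'a set) = x"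
proof (cases "x = 0")
  case False
  let ?U = "UNIV - {0::'a}"
  have "(\<Prod>y\<in>?U. x * y) = (\<Prod>y\<in>?U. y)"
    by (rule prod.reindex_bij_witness [of _ "\<lambda>y. y / x" "\<lambda>y. x * y"]) (use False in auto)
  then have "x ^ card ?U = 1"
    by (simp add: prod.distrib)
  moreover have "card (UNIV :: 'a set) = Suc (card ?U)"
    by (simp add: card_Diff_singleton card_gt_0_iff)
  ultimately show ?thesis
    by (simp only: power_Suc mult_1_right)
qed (simp add: power_0_left finite_UNIV_card_ge_0)

lemma power_eq_power_mod_3:
  assumes "(u::'a::monoid_mult) ^ 3 = 1"
  shows "u ^ m = u ^ (m mod 3)"
proof -
  have "u ^ m = (u ^ 3) ^ (m div 3) * u ^ (m mod 3)"
    by (simp only: power_mult [symmetric] power_add [symmetric] mult_div_mod_eq)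
  then show ?thesis
    using assms by simp
qed

lemma two_power_mod_3_if_odd: "odd n \<Longrightarrow> (2::nat) ^ n mod 3 = 2"
proof -
  assume "odd n"
  then obtain k where "n = Suc (2 * k)"
    using oddE by fastforce
  moreover have "[(4::nat) ^ k = 1 ^ k] (mod 3)"
    by (rule cong_pow) (simp add: cong_def)
  ultimately show ?thesis
    by (simp add: power_mult cong_def mod_mult_right_eq [symmetric])
qed

lemma even_if_cube_root_of_unity:
  assumes card: "card (UNIV :: 'a::{field,finite} set) = 2 ^ n"
    and u: "u ^ 3 = (1::'a)" "u \<noteq> 1"
  shows "even n"
proof (rule ccontr)
  assume "odd n"
  have "u = u ^ 2 ^ n"
    using power_card_eq_self [of u] card by simp
  also have "\<dots> = u ^ 2"
    using power_eq_power_mod_3 [OF u(1)] two_power_mod_3_if_odd [OF \<open>odd n\<close>] by metis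
  finally have "u * u = u * 1"
    by (simp add: power2_eq_square)
  moreover have "u \<noteq> 0"
    using u(1) by auto
  ultimately show False
    using u(2) by simp
qed

lemma card_zeros_of_periodic_function:
  fixes g :: "'a::ab_group_add \<Rightarrow> 'b::zero"
  assumes "finite V" and "0 \<in> V"
    and diff_closed: "\<And>v w. v \<in> V \<Longrightarrow> w \<in> V \<Longrightarrow> v - w \<in> V"
    and periodic: "\<And>x v. v \<in> V \<Longrightarrow> g (x + v) = g x"
    and zeros: "{x. g x = 0} \<subseteq> V \<union> (+) c ` V"
  shows "card {x. g x = 0} =
    (if g 0 = 0 then card V else 0) + (if g c = 0 \<and> c \<notin> V then card V else 0)"
proof -
  let ?Z = "{x. g x = 0}"
  have zeros_in_coset: "?Z \<inter> (+) y ` V = (if g y = 0 then (+) y ` V else {})" for y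
    using periodic by auto
  have card_coset: "card ((+) y ` V) = card V" for y
    by (simp add: card_image)
  have Z: "?Z = (?Z \<inter> V) \<union> (?Z \<inter> (+) c ` V)"
    using zeros by auto
  show ?thesis
  proof (cases "c \<in> V")
    case True
    have "(+) c ` V = V"
    proof
      show "(+) c ` V \<subseteq> V"
        using diff_closed [OF True diff_closed [OF \<open>0 \<in> V\<close>]] by auto
      show "V \<subseteq> (+) c ` V"
        using True diff_closed by (metis add.commute diff_add_cancel image_eqI subsetI)
    qed
    then show ?thesis
      using Z zeros_in_coset [of 0] True by auto
  next
    case False
    have "V \<inter> (+) c ` V = {}"
      using False diff_closed by (force simp: eq_diff_eq [symmetric])
    then have "card ?Z = card (?Z \<inter> V) + card (?Z \<inter> (+) c ` V)"
      using \<open>finite V\<close> by (subst Z, intro card_Un_disjoint) auto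
    then show ?thesis
      using zeros_in_coset [of 0] zeros_in_coset [of c] card_coset False by simp
  qed
qed

definition second_difference :: "('a::plus \<Rightarrow> 'b::plus) \<Rightarrow> 'a \<Rightarrow> 'a \<Rightarrow> 'a \<Rightarrow> 'b" where
  "second_difference f a b x = f (x + a + b) + f (x + a) + f (x + b) + f x"

lemma second_difference_inv_swap_eq_inverse:
  assumes "x \<notin> {0, 1}" "x + a \<notin> {0, 1}" "x + b \<notin> {0, 1}" "x + a + b \<notin> {0, 1}"
  shows "second_difference inv_swap a b x = second_difference inverse a b x"
  using assms by (simp add: second_difference_def inv_swap_def)

context
  assumes char2: "CHAR('a::field) = 2"
begin

lemma add_self_CHAR_2 [simp]: "x + x = (0::'a)"
  using uminus_CHAR_2 [OF char2, of x] by (simp add: add_eq_0_iff2)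

lemma add_self_left_CHAR_2 [simp]: "x + (x + y) = (y::'a)"
  by (simp add: add.assoc [symmetric])

lemma numeral_Bit0_CHAR_2 [simp]: "(numeral (Num.Bit0 k) :: 'a) = 0"
  by (simp only: numeral_Bit0 add_self_CHAR_2)

lemma numeral_Bit1_CHAR_2 [simp]: "(numeral (Num.Bit1 k) :: 'a) = 1"
  by (simp only: numeral_Bit1 add_self_CHAR_2 add_0_left)

lemma add_eq_iff_CHAR_2: "x + y = z \<longleftrightarrow> x = z + (y::'a)"
  by (metis add.commute add_self_left_CHAR_2)

lemma add_eq_0_iff_CHAR_2: "x + y = 0 \<longleftrightarrow> x = (y::'a)"
  by (simp add: add_eq_iff_CHAR_2)

lemma one_mem_iff_CHAR_2:
  "(1::'a) \<in> {a, b, a + b} \<longleftrightarrow> a^2 + b^2 + a*b = 1 + a*b*(a + b)"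
proof -
  have "(1::'a) \<in> {a, b, a + b} \<longleftrightarrow> (1 + a) * (1 + b) * (1 + a + b) = 0"
    by (auto simp: add_eq_0_iff_CHAR_2 add.assoc)
  also have "(1 + a) * (1 + b) * (1 + a + b) = (a^2 + b^2 + a*b) + (1 + a*b*(a + b))"
    by (simp add: algebra_simps power2_eq_square)
  finally show ?thesis
    by (simp only: add_eq_0_iff_CHAR_2)
qed

lemma cubic_pair_iff_CHAR_2:
  assumes "a \<noteq> b"
  shows "(a^3 + a + 1 = 0 \<and> b^3 + b + 1 = 0) \<longleftrightarrow>
    (a^2 + b^2 + a*b = 1 \<and> a*b*(a + b) = (1::'a))"
proof -
  have cubic_eq: "x^3 + x + 1 = x * (a^2 + b^2 + a*b + 1) + (a*b*(a + b) + 1)" if "x \<in> {a, b}" for x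
    using that by (auto simp: algebra_simps power2_eq_square power3_eq_cube)
  show ?thesis
  proof
    assume cubic: "a^3 + a + 1 = 0 \<and> b^3 + b + 1 = 0"
    have "(a + b) * (a^2 + b^2 + a*b + 1) = (a^3 + a + 1) + (b^3 + b + 1)"
      by (simp add: algebra_simps power2_eq_square power3_eq_cube)
    then have "a^2 + b^2 + a*b + 1 = 0"
      using cubic assms by (simp add: add_eq_0_iff_CHAR_2)
    moreover from this have "a*b*(a + b) + 1 = 0"
      using cubic cubic_eq [of a] by simp
    ultimately show "a^2 + b^2 + a*b = 1 \<and> a*b*(a + b) = 1"
      by (simp add: add_eq_0_iff_CHAR_2)
  next
    assume "a^2 + b^2 + a*b = 1 \<and> a*b*(a + b) = 1"
    then show "a^3 + a + 1 = 0 \<and> b^3 + b + 1 = 0"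
      using cubic_eq by simp
  qed
qed

lemma cube_roots_of_unity_iff_CHAR_2:
  assumes "a \<noteq> 0" "b \<noteq> 0" "a \<noteq> b"
  shows "(a^3 = 1 \<and> b^3 = 1) \<longleftrightarrow> (1 \<in> {a, b, a + b} \<and> a*b*(a + b) = (1::'a))"
proof -
  have cube_eq: "x^3 + 1 = x * (a^2 + b^2 + a*b) + (a*b*(a + b) + 1)" if "x \<in> {a, b}" for x
    using that by (auto simp: algebra_simps power2_eq_square power3_eq_cube)
  show ?thesis
  proof
    assume cubes: "a^3 = 1 \<and> b^3 = 1"
    have "(a + b) * (a^2 + b^2 + a*b) = a^3 + b^3"
      by (simp add: algebra_simps power2_eq_square power3_eq_cube)
    then have "a^2 + b^2 + a*b = 0"
      using cubes assms(3) by (simp add: add_eq_0_iff_CHAR_2)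
    moreover from this have "a*b*(a + b) = 1"
      using cubes cube_eq [of a] by (simp add: add_eq_0_iff_CHAR_2)
    ultimately show "1 \<in> {a, b, a + b} \<and> a*b*(a + b) = 1"
      using one_mem_iff_CHAR_2 [of a b] by simp
  next
    assume one: "1 \<in> {a, b, a + b} \<and> a*b*(a + b) = 1"
    then have "a^2 + b^2 + a*b = 0"
      using one_mem_iff_CHAR_2 [of a b] by simp
    with one show "a^3 = 1 \<and> b^3 = 1"
      using cube_eq by (simp add: add_eq_0_iff_CHAR_2)
  qed
qed

lemma second_difference_add_period_CHAR_2:
  fixes f :: "'a \<Rightarrow> 'b::ab_semigroup_add"
  shows "v \<in> {0, a, b, a + b} \<Longrightarrow> second_difference f a b (x + v) = second_difference f a b x"
  by (auto simp: second_difference_def ac_simps)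

lemma second_difference_eq_0_if_degenerate_CHAR_2:
  fixes f :: "'a \<Rightarrow> 'a"
  assumes "a*b*(a + b) = 0"
  shows "second_difference f a b x = 0"
proof -
  have "a = 0 \<or> b = 0 \<or> a = b"
    using assms by (simp add: add_eq_0_iff_CHAR_2)
  then show ?thesis
    by (auto simp: second_difference_def ac_simps)
qed

lemma second_difference_inverse_CHAR_2:
  fixes a b x :: 'a
  assumes "x \<noteq> 0" "x + a \<noteq> 0" "x + b \<noteq> 0" "x + a + b \<noteq> 0"
  shows "second_difference inverse a b x = a*b*(a + b) / (x * (x + a) * (x + b) * (x + a + b))"
  using assms unfolding second_difference_def by (simp add: divide_simps) (simp add: algebra_simps)

lemma second_difference_inverse_0_CHAR_2:
  assumes "a*b*(a + b) \<noteq> (0::'a)"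
  shows "second_difference inverse a b 0 = (a^2 + b^2 + a*b) / (a*b*(a + b))"
  using assms unfolding second_difference_def
  by (simp add: divide_simps power2_eq_square) (simp add: algebra_simps)

lemma second_difference_inv_swap_0_eq_0_iff_CHAR_2:
  assumes "a*b*(a + b) \<noteq> 0" "(1::'a) \<notin> {a, b, a + b}"
  shows "second_difference inv_swap a b 0 = 0 \<longleftrightarrow> a^2 + b^2 + a*b = a*b*(a + b)"
proof -
  have "second_difference inv_swap a b 0 = second_difference inverse a b 0 + 1"
    using assms by (simp add: second_difference_def inv_swap_def)
  then show ?thesis
    using assms by (simp add: second_difference_inverse_0_CHAR_2 add_eq_0_iff_CHAR_2)
qed

lemma second_difference_inv_swap_1_eq_0_iff_CHAR_2:
  assumes "a*b*(a + b) \<noteq> 0" "(1::'a) \<notin> {a, b, a + b}"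
  shows "second_difference inv_swap a b 1 = 0 \<longleftrightarrow> a^2 + b^2 + a*b = 1"
proof -
  have nonzero: "1 + a \<noteq> 0" "1 + b \<noteq> 0" "1 + a + b \<noteq> 0"
    using assms(2) by (auto simp: add_eq_0_iff_CHAR_2 add.assoc)
  have "second_difference inv_swap a b 1 = second_difference inverse a b 1 + 1"
    using assms nonzero by (simp add: second_difference_def inv_swap_def)
  also have "\<dots> = a*b*(a + b) / ((1 + a) * (1 + b) * (1 + a + b)) + 1"
    using nonzero by (simp add: second_difference_inverse_CHAR_2)
  finally have "second_difference inv_swap a b 1 = 0 \<longleftrightarrow>
      a*b*(a + b) = (1 + a) * (1 + b) * (1 + a + b)"
    using nonzero by (simp add: add_eq_0_iff_CHAR_2)
  also have "(1 + a) * (1 + b) * (1 + a + b) = (a^2 + b^2 + a*b + 1) + a*b*(a + b)"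
    by (simp add: algebra_simps power2_eq_square)
  finally show ?thesis
    by (simp add: add_eq_0_iff_CHAR_2)
qed

lemma second_difference_inv_swap_0_eq_0_iff_one_mem_CHAR_2:
  assumes "a*b*(a + b) \<noteq> 0" "(1::'a) \<in> {a, b, a + b}"
  shows "second_difference inv_swap a b 0 = 0 \<longleftrightarrow> a*b*(a + b) = 1"
proof -
  have "second_difference inv_swap a b 0 = second_difference inverse a b 0"
    using assms by (auto simp: second_difference_def inv_swap_def add_eq_0_iff_CHAR_2)
  then have "second_difference inv_swap a b 0 = 0 \<longleftrightarrow> a^2 + b^2 + a*b = 0"
    using assms(1) by (simp add: second_difference_inverse_0_CHAR_2)
  also have "\<dots> \<longleftrightarrow> a*b*(a + b) = 1"
    using assms(2) one_mem_iff_CHAR_2 [of a b] by (simp add: add_eq_0_iff_CHAR_2)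
  finally show ?thesis .
qed

end

lemma nabla_eq_card_if_degenerate:
  fixes f :: "'a::{field,finite} \<Rightarrow> 'a"
  assumes "CHAR('a) = 2" "a*b*(a + b) = 0"
  shows "nabla f a b = card (UNIV :: 'a set)"
  using second_difference_eq_0_if_degenerate_CHAR_2 [OF assms]
  by (simp add: nabla_def second_difference_def)

lemma nabla_inv_swap_CHAR_2:
  fixes a b :: "'a::{field,finite}"
  assumes char2: "CHAR('a) = 2" and nondegenerate: "a*b*(a + b) \<noteq> 0"
  shows "nabla inv_swap a b =
    (if 1 \<in> {a, b, a + b} then (if a*b*(a + b) = 1 then 4 else 0)
     else (if a^2 + b^2 + a*b = a*b*(a + b) then 4 else 0) + (if a^2 + b^2 + a*b = 1 then 4 else 0))"
proof -
  define V where "V = {0, a, b, a + b}"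
  let ?g = "second_difference inv_swap a b"
  have "a \<noteq> 0" "b \<noteq> 0" "a \<noteq> b"
    using nondegenerate char2 by (auto simp: add_eq_0_iff_CHAR_2)
  then have card_V: "card V = 4"
    using char2 by (auto simp: V_def add_eq_0_iff_CHAR_2)
  have diff_closed: "v - w \<in> V" if "v \<in> V" "w \<in> V" for v w
    using that char2 by (auto simp: V_def minus_CHAR_2 ac_simps)
  have zeros: "{x. ?g x = 0} \<subseteq> V \<union> (+) 1 ` V"
  proof (rule subsetI, rule ccontr)
    fix x
    assume "x \<in> {x. ?g x = 0}" and outside: "x \<notin> V \<union> (+) 1 ` V"
    have avoids: "x + v \<notin> {0, 1}" if "v \<in> V" for v
      using outside that char2 by (auto simp: add_eq_iff_CHAR_2)
    then have off_01: "x \<notin> {0, 1}" "x + a \<notin> {0, 1}" "x + b \<notin> {0, 1}" "x + a + b \<notin> {0, 1}"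
      using avoids [of 0] avoids [of a] avoids [of b] avoids [of "a + b"] by (simp_all add: V_def add.assoc)
    then have "?g x = a*b*(a + b) / (x * (x + a) * (x + b) * (x + a + b))"
      using char2 by (simp add: second_difference_inv_swap_eq_inverse second_difference_inverse_CHAR_2)
    with nondegenerate off_01 have "?g x \<noteq> 0"
      by simp
    with \<open>x \<in> {x. ?g x = 0}\<close> show False
      by simp
  qed
  have "nabla inv_swap a b = card {x. ?g x = 0}"
    by (simp add: nabla_def second_difference_def)
  also have "\<dots> = (if ?g 0 = 0 then card V else 0) + (if ?g 1 = 0 \<and> 1 \<notin> V then card V else 0)"
  proof (rule card_zeros_of_periodic_function [OF _ _ diff_closed _ zeros])
    show "?g (x + v) = ?g x" if "v \<in> V" for x v
      using that char2 by (simp add: V_def second_difference_add_period_CHAR_2)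
  qed (simp_all add: V_def)
  finally have count: "nabla inv_swap a b =
      (if ?g 0 = 0 then 4 else 0) + (if ?g 1 = 0 \<and> 1 \<notin> V then 4 else 0)"
    unfolding card_V .
  show ?thesis
  proof (cases "(1::'a) \<in> {a, b, a + b}")
    case True
    then show ?thesis
      using count second_difference_inv_swap_0_eq_0_iff_one_mem_CHAR_2 [OF char2 nondegenerate True]
      by (simp add: V_def)
  next
    case False
    then show ?thesis
      using count second_difference_inv_swap_0_eq_0_iff_CHAR_2 [OF char2 nondegenerate False]
        second_difference_inv_swap_1_eq_0_iff_CHAR_2 [OF char2 nondegenerate False]
      by (simp add: V_def)
  qed
qed

lemma subfield_star_2_iff:
  fixes a b :: "'a::{field,finite}"
  assumes card: "card (UNIV :: 'a set) = 2 ^ n" and "a \<noteq> 0" "b \<noteq> 0" "a \<noteq> b"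
  shows "(a \<in> subfield_star n 2 \<and> b \<in> subfield_star n 2) \<longleftrightarrow>
    (1 \<in> {a, b, a + b} \<and> a*b*(a + b) = 1)"
proof -
  have power_4_iff: "x ^ 4 = x \<longleftrightarrow> x ^ 3 = 1" if "x \<noteq> 0" for x :: 'a
    using that mult_left_cancel [OF that, of "x ^ 3" 1] by (simp add: power_Suc [symmetric] del: power_Suc)
  have "(a \<in> subfield_star n 2 \<and> b \<in> subfield_star n 2) \<longleftrightarrow> even n \<and> a ^ 3 = 1 \<and> b ^ 3 = 1"
    using assms by (auto simp: subfield_star_def power_4_iff)
  also have "\<dots> \<longleftrightarrow> a ^ 3 = 1 \<and> b ^ 3 = 1"
    using even_if_cube_root_of_unity [OF card] \<open>a \<noteq> b\<close> by blast
  also have "\<dots> \<longleftrightarrow> 1 \<in> {a, b, a + b} \<and> a*b*(a + b) = 1"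
    using cube_roots_of_unity_iff_CHAR_2 [OF CHAR_eq_2_if_card_eq_power_2 [OF card]] assms(2-4) .
  finally show ?thesis .
qed

theorem theorem3p1:
  fixes n :: nat and a b :: "'a::{field,finite}"
  assumes "n > 0" and "card (UNIV :: 'a set) = 2 ^ n"
  shows "nabla (inv_swap :: 'a \<Rightarrow> 'a) a b =
    (if a * b * (a + b) = 0 then 2 ^ n
     else if a \<noteq> b \<and> a^3 + a + 1 = 0 \<and> b^3 + b + 1 = 0 then 8
     else if a * b * (a + b) \<noteq> 0 \<and>
             ((a \<in> subfield_star n 2 \<and> b \<in> subfield_star n 2) \<or> (a, b) \<in> S_set n) then 4
     else 0)"
proof -
  have char2: "CHAR('a) = 2"
    using assms(2) by (rule CHAR_eq_2_if_card_eq_power_2)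
  show ?thesis
  proof (cases "a * b * (a + b) = 0")
    case True
    then show ?thesis
      using nabla_eq_card_if_degenerate [OF char2 True] assms(2) by simp
  next
    case False
    then have "a \<noteq> 0" "b \<noteq> 0" "a \<noteq> b"
      using char2 by (auto simp: add_eq_0_iff_CHAR_2)
    have S_set_iff: "(a, b) \<in> S_set n \<longleftrightarrow> a^2 + b^2 + a*b = 1 \<or> a^2 + b^2 + a*b = a*b*(a + b)"
      if "\<not> (a^3 + a + 1 = 0 \<and> b^3 + b + 1 = 0)"
      using that \<open>a \<noteq> 0\<close> \<open>b \<noteq> 0\<close> by (auto simp: S_set_def)
    show ?thesis
      using nabla_inv_swap_CHAR_2 [OF char2 False]
        subfield_star_2_iff [OF assms(2) \<open>a \<noteq> 0\<close> \<open>b \<noteq> 0\<close> \<open>a \<noteq> b\<close>]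
        cubic_pair_iff_CHAR_2 [OF char2 \<open>a \<noteq> b\<close>] one_mem_iff_CHAR_2 [OF char2, of a b]
        S_set_iff False
      by (auto simp: char2)
  qed
qed

end
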